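(* Let $G_{\mathrm{inv}}$ be the $q$-grammar with master variables $S=\{x,y\}$, rule $x_j\mapsto q^jy_jx_{j+1}$, $y_j\mapsto q^jy_jx_{j+1}$ ($j\ge0$), and order AIO, and let $D$ be its $q$-derivative. Let $\phi$ be the evaluation with $\phi(x_j)=x$, $\phi(y_j)=y$ for all $j\ge0$ ($x,y$ commuting indeterminates). Then for all $n\ge1$, \[ \phi\big(D^n(x_0)\big)=A^{\mathrm{inv}}_n(q;x,y):=\sum_{\sigma\in\mathfrak{S}_n}q^{\operatorname{inv}(\sigma)}x^{\operatorname{asc}(\sigma)}y^{\operatorname{des}(\sigma)}. \]
   Context: Let $\mathbb{K}$ be a commutative ring with unity and characteristic zero, $q$ an indeterminate. For a set $S$ of master variables, $\mathbb{S}=\{s_i:s\in S,\ i\in\{0,1,2,\dots\}\}$ is a set of non-commuting variables, $F(\mathbb{S})$ the free group on $\mathbb{S}$ and $\mathbb{E}=\mathbb{K}[q][F(\mathbb{S})]$ its group algebra. A rule $R$ assigns to each $s_i$ an element $R(s_i)\in\mathbb{E}$, extended by $R(s_i^{-1})=-s_i^{-1}R(s_i)s_{i+1}^{-1}$. The up-arrow $\uparrow$ is the linear map replacing each letter $s_i^{\pm1}$ of a word by $s_{i+1}^{\pm1}$. An order rewrites each word by permuting its letters (extended linearly); AIO stably reorders the letters according to the position of their underlying variable in the sequence $x_0,y_0,x_1,y_1,x_2,y_2,\dots$. A $q$-grammar is a triple $(S,R,\rho)$; its $q$-derivative is the $\mathbb{K}[q]$-linear map $D$ with $D(w_1\cdots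 w_n)=\sum_{j=1}^n\rho\big(w_1\cdots w_{j-1}R(w_j)\uparrow(w_{j+1}\cdots w_n)\big)$ for letters $w_j\in\mathbb{S}\cup\mathbb{S}^{-1}$, $D^0=\mathrm{id}$, $D^k=D\circ D^{k-1}$. An evaluation sends each $s_i$ to an element of a commutative ring containing $\mathbb{K}[q]$ and extends to a $\mathbb{K}[q]$-linear ring morphism with $\phi(s_i^{-1})=\phi(s_i)^{-1}$. For $\sigma\in\mathfrak{S}_n$ with $\sigma_0=\sigma_{n+1}=0$, $0\le i\le n$ is a descent if $\sigma_i>\sigma_{i+1}$, an ascent otherwise; $\operatorname{des},\operatorname{asc}$ count them; $\operatorname{inv}(\sigma)=\#\{(i,j):1\le i<j\le n,\ \sigma_i>\sigma_j\}$. *)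

theory Defs
  imports "HOL-Library.Poly_Mapping" "HOL-Computational_Algebra.Polynomial" "HOL-Combinatorics.Permutations"
begin

datatype mvar = VX | VY

(* a letter s_i^{+-1}: (master variable, index i, inverse flag (True = s_i^{-1})) *)
type_synonym letter = "mvar \<times> nat \<times> bool"
type_synonym word = "letter list"

(* free reduction: reduced words represent the elements of the free group F(S) *)
fun cancel_letter :: "letter \<Rightarrow> word \<Rightarrow> word" where
  "cancel_letter a [] = [a]"
| "cancel_letter a (b # w) =
     (if fst a = fst b \<and> fst (snd a) = fst (snd b) \<and> snd (snd a) \<noteq> snd (snd b)
      then w else a # b # w)"

definition reduce :: "word \<Rightarrow> word" where
  "reduce w = foldr cancel_letter w []"

(* E = K[q][F(S)] : finitely supported maps from reduced words to K[q] *)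
type_synonym 'k E = "word \<Rightarrow>\<^sub>0 'k poly"

definition gword :: "word \<Rightarrow> 'k::comm_ring_1 E" where
  "gword w = Poly_Mapping.single (reduce w) 1"

definition smultE :: "'k::comm_ring_1 poly \<Rightarrow> 'k E \<Rightarrow> 'k E" where
  "smultE c f = (\<Sum>w\<in>Poly_Mapping.keys f. Poly_Mapping.single w (c * Poly_Mapping.lookup f w))"

definition linE :: "(word \<Rightarrow> 'k::comm_ring_1 E) \<Rightarrow> 'k E \<Rightarrow> 'k E" where
  "linE g f = (\<Sum>w\<in>Poly_Mapping.keys f. smultE (Poly_Mapping.lookup f w) (g w))"

definition mulE :: "'k::comm_ring_1 E \<Rightarrow> 'k E \<Rightarrow> 'k E" where
  "mulE f h = (\<Sum>u\<in>Poly_Mapping.keys f. \<Sum>v\<in>Poly_Mapping.keys h.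
      Poly_Mapping.single (reduce (u @ v)) (Poly_Mapping.lookup f u * Poly_Mapping.lookup h v))"

fun up_letter :: "letter \<Rightarrow> letter" where
  "up_letter (v, i, b) = (v, Suc i, b)"

definition upE :: "'k::comm_ring_1 E \<Rightarrow> 'k E" where
  "upE = linE (\<lambda>w. gword (map up_letter w))"

fun rule_ext :: "(mvar \<times> nat \<Rightarrow> 'k::comm_ring_1 E) \<Rightarrow> letter \<Rightarrow> 'k E" where
  "rule_ext R (v, i, False) = R (v, i)"
| "rule_ext R (v, i, True) =
     smultE (-1) (mulE (mulE (gword [(v, i, True)]) (R (v, i))) (gword [(v, Suc i, True)]))"

definition qderiv :: "(mvar \<times> nat \<Rightarrow> 'k::comm_ring_1 E) \<Rightarrow> ('k E \<Rightarrow> 'k E) \<Rightarrow> 'k E \<Rightarrow> 'k E" where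
  "qderiv R rho = linE (\<lambda>w. \<Sum>j<length w.
      rho (mulE (mulE (gword (take j w)) (rule_ext R (w ! j))) (upE (gword (drop (Suc j) w)))))"

(* order AIO: stable reordering according to x_0, y_0, x_1, y_1, ... *)
fun aio_key :: "letter \<Rightarrow> nat" where
  "aio_key (v, i, b) = 2 * i + (if v = VX then 0 else 1)"

definition AIO :: "'k::comm_ring_1 E \<Rightarrow> 'k E" where
  "AIO = linE (\<lambda>w. gword (sort_key aio_key w))"

fun R_inv :: "mvar \<times> nat \<Rightarrow> 'k::comm_ring_1 E" where
  "R_inv (v, j) = smultE ([:0, 1:] ^ j) (gword [(VY, j, False), (VX, Suc j, False)])"

definition D_inv :: "'k::comm_ring_1 E \<Rightarrow> 'k E" where
  "D_inv = qderiv R_inv AIO"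

(* target ring K[q][x][y]: inner variable q, middle x, outer y *)
definition varx :: "'k::comm_ring_1 poly poly poly" where
  "varx = [: [: 0, 1 :] :]"

definition vary :: "'k::comm_ring_1 poly poly poly" where
  "vary = [: 0, 1 :]"

definition embq :: "'k::comm_ring_1 poly \<Rightarrow> 'k poly poly poly" where
  "embq c = [: [: c :] :]"

definition ring_inv :: "'a::comm_ring_1 \<Rightarrow> 'a" where
  "ring_inv a = (THE b. a * b = 1)"

fun phi_letter :: "letter \<Rightarrow> 'k::comm_ring_1 poly poly poly" where
  "phi_letter (v, i, b) = (let a = (if v = VX then varx else vary) in if b then ring_inv a else a)"

definition phi :: "'k::comm_ring_1 E \<Rightarrow> 'k poly poly poly" where
  "phi f = (\<Sum>w\<in>Poly_Mapping.keys f. embq (Poly_Mapping.lookup f w) * prod_list (map phi_letter w))"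

(* statistics, with sigma_0 = sigma_{n+1} = 0 *)
definition ext_perm :: "nat \<Rightarrow> (nat \<Rightarrow> nat) \<Rightarrow> nat \<Rightarrow> nat" where
  "ext_perm n \<sigma> i = (if 1 \<le> i \<and> i \<le> n then \<sigma> i else 0)"

definition des :: "nat \<Rightarrow> (nat \<Rightarrow> nat) \<Rightarrow> nat" where
  "des n \<sigma> = card {i \<in> {0..n}. ext_perm n \<sigma> i > ext_perm n \<sigma> (Suc i)}"

definition asc :: "nat \<Rightarrow> (nat \<Rightarrow> nat) \<Rightarrow> nat" where
  "asc n \<sigma> = card {i \<in> {0..n}. \<not> (ext_perm n \<sigma> i > ext_perm n \<sigma> (Suc i))}"

definition inv :: "nat \<Rightarrow> (nat \<Rightarrow> nat) \<Rightarrow> nat" where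
  "inv n \<sigma> = card {(i, j). 1 \<le> i \<and> i < j \<and> j \<le> n \<and> \<sigma> i > \<sigma> j}"

definition A_inv :: "nat \<Rightarrow> 'k::comm_ring_1 poly poly poly" where
  "A_inv n = (\<Sum>\<sigma>\<in>{\<sigma>. \<sigma> permutes {1..n}}.
      embq ([:0, 1:] ^ inv n \<sigma>) * varx ^ asc n \<sigma> * vary ^ des n \<sigma>)"

end

theory Submission
  imports Defs
begin

(*
  Every permutation of {1..n+1} arises in exactly one way by inserting the new maximum n+1 into a
  permutation sigma of {1..n} right after its first g entries, 0 <= g <= n.  With the convention
  sigma_0 = sigma_(n+1) = 0, this insertion replaces the ascent or descent between positions g and
  g+1 by an ascent followed by a descent, and it creates exactly n - g new inversions.

  On the grammar side, every word of D^n(x_0) consists of letters x or y carrying the indices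
  0, 1, ..., n in this order, so AIO fixes it, and D replaces the letter of index j by y_j x_(j+1),
  shifts the indices of the later letters and multiplies by q^j.  Encoding sigma by its
  ascent/descent pattern read from right to left, the slot g carries index n - g, and the two
  descriptions match.  Induction on n gives D^n(x_0) = sum of q^inv(sigma) w(sigma), and the
  evaluation sends the word w(sigma) to x^asc(sigma) y^des(sigma).
*)

subsection \<open>Linearity in the group algebra\<close>

lemma sum_keys_sum:
  fixes g :: "'i \<Rightarrow> 'a \<Rightarrow>\<^sub>0 'b::comm_monoid_add"
    and F :: "'a \<Rightarrow> 'b \<Rightarrow> 'c::comm_monoid_add"
  assumes "\<And>k. F k 0 = 0" and "\<And>k a b. F k (a + b) = F k a + F k b"
  shows "(\<Sum>k\<in>Poly_Mapping.keys (\<Sum>i\<in>I. g i). F k (Poly_Mapping.lookup (\<Sum>i\<in>I. g i) k))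
       = (\<Sum>i\<in>I. \<Sum>k\<in>Poly_Mapping.keys (g i). F k (Poly_Mapping.lookup (g i) k))"
proof (induction I rule: infinite_finite_induct)
  case (insert i I)
  then show ?case
    by (simp add: setsum_keys_plus_distrib assms)
qed simp_all

lemma lookup_smultE: "Poly_Mapping.lookup (smultE c f) w = c * Poly_Mapping.lookup f w"
  by (simp add: smultE_def lookup_sum lookup_single when_def in_keys_iff)

lemma smultE_single: "smultE c (Poly_Mapping.single w a) = Poly_Mapping.single w (c * a)"
  by (rule poly_mapping_eqI) (simp add: lookup_smultE lookup_single when_def)

lemma smultE_zero_left: "smultE 0 f = 0"
  by (rule poly_mapping_eqI) (simp add: lookup_smultE)

lemma smultE_add_left: "smultE (a + b) f = smultE a f + smultE b f"
  by (rule poly_mapping_eqI) (simp add: lookup_smultE lookup_add algebra_simps)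

lemma smultE_sum: "smultE c (\<Sum>i\<in>I. f i) = (\<Sum>i\<in>I. smultE c (f i))"
  by (rule poly_mapping_eqI) (simp add: lookup_smultE lookup_sum sum_distrib_left)

lemma linE_single: "linE g (Poly_Mapping.single w c) = smultE c (g w)"
  by (cases "c = 0") (simp_all add: linE_def smultE_def)

lemma linE_sum: "linE g (\<Sum>i\<in>I. f i) = (\<Sum>i\<in>I. linE g (f i))"
  unfolding linE_def
  by (rule sum_keys_sum[where F = "\<lambda>w a. smultE a (g w)"])
     (simp_all add: smultE_zero_left smultE_add_left)

lemma embq_zero: "embq 0 = 0"
  by (simp add: embq_def)

lemma embq_add: "embq (a + b) = embq a + embq b"
  by (simp add: embq_def)

lemma phi_single: "phi (Poly_Mapping.single w c) = embq c * prod_list (map phi_letter w)"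
  by (cases "c = 0") (simp_all add: phi_def embq_def)

lemma phi_sum: "phi (\<Sum>i\<in>I. f i) = (\<Sum>i\<in>I. phi (f i))"
  unfolding phi_def
  by (rule sum_keys_sum) (simp_all add: embq_add embq_zero distrib_right)

lemma mulE_single:
  "mulE (Poly_Mapping.single u a) (Poly_Mapping.single v b) = Poly_Mapping.single (reduce (u @ v)) (a * b)"
  by (cases "a = 0"; cases "b = 0") (auto simp: mulE_def)

subsection \<open>Words with consecutive indices\<close>

definition positive_word :: "word \<Rightarrow> bool" where
  "positive_word w \<longleftrightarrow> (\<forall>l\<in>set w. \<not> snd (snd l))"

lemma reduce_positive_word: "positive_word w \<Longrightarrow> reduce w = w"
proof (induction w)
  case (Cons a w)
  then show ?case
    by (cases w) (auto simp: reduce_def positive_word_def)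
qed (simp add: reduce_def)

lemma gword_positive_word: "positive_word w \<Longrightarrow> gword w = Poly_Mapping.single w 1"
  by (simp add: gword_def reduce_positive_word)

(* The words occurring in D^n(x_0) are determined by their master variables: the indices are
   consecutive. *)
fun indexed_word :: "nat \<Rightarrow> mvar list \<Rightarrow> word" where
  "indexed_word k [] = []"
| "indexed_word k (c # cs) = (c, k, False) # indexed_word (Suc k) cs"

lemma positive_word_indexed_word: "positive_word (indexed_word k cs)"
  by (induction cs arbitrary: k) (auto simp: positive_word_def)

lemma length_indexed_word [simp]: "length (indexed_word k cs) = length cs"
  by (induction cs arbitrary: k) auto

lemma indexed_word_append:
  "indexed_word k (cs @ ds) = indexed_word k cs @ indexed_word (k + length cs) ds"
  by (induction cs arbitrary: k) auto

lemma take_indexed_word: "take j (indexed_word k cs) = indexed_word k (take j cs)"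
  by (induction cs arbitrary: k j) (auto simp: take_Cons split: nat.splits)

lemma drop_indexed_word: "drop j (indexed_word k cs) = indexed_word (k + j) (drop j cs)"
  by (induction cs arbitrary: k j) (auto simp: drop_Cons split: nat.splits)

lemma nth_indexed_word: "j < length cs \<Longrightarrow> indexed_word k cs ! j = (cs ! j, k + j, False)"
  by (induction cs arbitrary: k j) (auto simp: nth_Cons split: nat.splits)

lemma map_up_letter_indexed_word: "map up_letter (indexed_word k cs) = indexed_word (Suc k) cs"
  by (induction cs arbitrary: k) auto

lemma aio_key_indexed_word_ge: "x \<in> set (map aio_key (indexed_word k cs)) \<Longrightarrow> 2 * k \<le> x"
  by (induction cs arbitrary: k) fastforce+

lemma sorted_aio_key_indexed_word: "sorted (map aio_key (indexed_word k cs))"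
proof (induction cs arbitrary: k)
  case (Cons c cs)
  have "\<forall>x\<in>set (map aio_key (indexed_word (Suc k) cs)). aio_key (c, k, False) \<le> x"
    using aio_key_indexed_word_ge[of _ "Suc k" cs] by fastforce
  then show ?case
    using Cons by simp
qed simp

lemma gword_indexed_word: "gword (indexed_word k cs) = Poly_Mapping.single (indexed_word k cs) 1"
  by (rule gword_positive_word[OF positive_word_indexed_word])

lemma AIO_indexed_word:
  "AIO (Poly_Mapping.single (indexed_word k cs) a) = Poly_Mapping.single (indexed_word k cs) a"
  by (simp add: AIO_def linE_single sort_key_id_if_sorted[OF sorted_aio_key_indexed_word]
      gword_indexed_word smultE_single)

lemma upE_indexed_word:
  "upE (Poly_Mapping.single (indexed_word k cs) a) = Poly_Mapping.single (indexed_word (Suc k) cs) a"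
  by (simp add: upE_def linE_single map_up_letter_indexed_word gword_indexed_word smultE_single)

lemma D_inv_indexed_word:
  "D_inv (Poly_Mapping.single (indexed_word k cs) c) =
    (\<Sum>j<length cs. Poly_Mapping.single (indexed_word k (take j cs @ [VY, VX] @ drop (Suc j) cs))
       (c * [:0, 1:] ^ (k + j)))"
proof -
  have summand: "AIO (mulE (mulE (gword (take j (indexed_word k cs))) (rule_ext R_inv (indexed_word k cs ! j)))
          (upE (gword (drop (Suc j) (indexed_word k cs)))))
      = Poly_Mapping.single (indexed_word k (take j cs @ [VY, VX] @ drop (Suc j) cs)) ([:0, 1:] ^ (k + j))"
    if j: "j < length cs" for j
  proof -
    have rule: "rule_ext R_inv (indexed_word k cs ! j)
        = Poly_Mapping.single (indexed_word (k + j) [VY, VX]) ([:0, 1:] ^ (k + j))"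
      using j by (simp add: nth_indexed_word gword_positive_word positive_word_def smultE_single)
    have left: "indexed_word k (take j cs) @ indexed_word (k + j) [VY, VX]
        = indexed_word k (take j cs @ [VY, VX])"
      using j by (simp add: indexed_word_append)
    have right: "indexed_word k (take j cs @ [VY, VX]) @ indexed_word (Suc (Suc (k + j))) (drop (Suc j) cs)
        = indexed_word k (take j cs @ [VY, VX] @ drop (Suc j) cs)"
      using j by (simp add: indexed_word_append)
    show ?thesis
      by (simp add: take_indexed_word drop_indexed_word gword_indexed_word rule mulE_single left right
          reduce_positive_word[OF positive_word_indexed_word] upE_indexed_word AIO_indexed_word
          del: indexed_word.simps)
  qed
  show ?thesis
    unfolding D_inv_def qderiv_def linE_single smultE_sum
    by (rule sum.cong) (simp_all add: summand smultE_single)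
qed

subsection \<open>Inserting the maximum into a permutation\<close>

definition skip_index :: "nat \<Rightarrow> nat \<Rightarrow> nat" where
  "skip_index g i = (if i \<le> g then i else Suc i)"

definition insert_max :: "nat \<Rightarrow> nat \<Rightarrow> (nat \<Rightarrow> nat) \<Rightarrow> nat \<Rightarrow> nat" where
  "insert_max n g \<sigma> j =
     (if j \<le> g then \<sigma> j else if j = Suc g then Suc n else if j \<le> Suc n then \<sigma> (j - 1) else j)"

lemma strict_mono_skip_index: "strict_mono (skip_index g)"
  by (rule strict_monoI) (auto simp: skip_index_def)

lemma skip_index_image:
  assumes "g \<le> n"
  shows "skip_index g ` {1..n} = {1..Suc n} - {Suc g}"
proof
  show "{1..Suc n} - {Suc g} \<subseteq> skip_index g ` {1..n}"
  proof
    fix x assume x: "x \<in> {1..Suc n} - {Suc g}"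
    have "x = skip_index g (if x \<le> g then x else x - 1)"
      using x by (auto simp: skip_index_def)
    moreover have "(if x \<le> g then x else x - 1) \<in> {1..n}"
      using x assms by auto
    ultimately show "x \<in> skip_index g ` {1..n}"
      by blast
  qed
qed (auto simp: skip_index_def)

lemma insert_max_skip_index: "i \<le> n \<Longrightarrow> insert_max n g \<sigma> (skip_index g i) = \<sigma> i"
  by (auto simp: insert_max_def skip_index_def)

lemma insert_max_Suc: "insert_max n g \<sigma> (Suc g) = Suc n"
  by (simp add: insert_max_def)

lemma permutes_atLeastAtMost_le_iff: "\<sigma> permutes {1..n} \<Longrightarrow> \<sigma> j \<le> n \<longleftrightarrow> j \<le> n"
  by (cases "j \<in> {1..n}") (auto dest: permutes_in_image permutes_not_in)

lemma insert_max_permutes: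
  assumes \<sigma>: "\<sigma> permutes {1..n}" and g: "g \<le> n"
  shows "insert_max n g \<sigma> permutes {1..Suc n}"
proof (rule bij_imp_permutes)
  have "{1..Suc n} = insert (Suc g) (skip_index g ` {1..n})"
    using skip_index_image[OF g] g by auto
  then have "insert_max n g \<sigma> ` {1..Suc n} = insert (Suc n) ((insert_max n g \<sigma> \<circ> skip_index g) ` {1..n})"
    by (simp add: image_comp insert_max_Suc)
  also have "(insert_max n g \<sigma> \<circ> skip_index g) ` {1..n} = \<sigma> ` {1..n}"
    by (rule image_cong) (simp_all add: insert_max_skip_index)
  finally have "insert_max n g \<sigma> ` {1..Suc n} = {1..Suc n}"
    using permutes_image[OF \<sigma>] by auto
  then show "bij_betw (insert_max n g \<sigma>) {1..Suc n} {1..Suc n}"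
    by (simp add: bij_betw_def eq_card_imp_inj_on)
  show "insert_max n g \<sigma> x = x" if "x \<notin> {1..Suc n}" for x
    using that g permutes_not_in[OF \<sigma>, of 0] by (cases "x = 0") (auto simp: insert_max_def)
qed

lemma insert_max_eq_Suc_iff:
  assumes "\<sigma> permutes {1..n}" and "g \<le> n"
  shows "insert_max n g \<sigma> x = Suc n \<longleftrightarrow> x = Suc g"
  using permutes_inj[OF insert_max_permutes[OF assms]] insert_max_Suc[of n g \<sigma>]
  by (metis injD)

lemma insert_max_inject:
  assumes \<sigma>: "\<sigma> permutes {1..n}" and \<sigma>': "\<sigma>' permutes {1..n}" and "g' \<le> n"
    and eq: "insert_max n g \<sigma> = insert_max n g' \<sigma>'"
  shows "\<sigma> = \<sigma>' \<and> g = g'"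
proof -
  have "insert_max n g' \<sigma>' (Suc g) = Suc n"
    using eq insert_max_Suc by metis
  then have "g = g'"
    using insert_max_eq_Suc_iff[OF \<sigma>' \<open>g' \<le> n\<close>] by simp
  have "\<sigma> i = \<sigma>' i" for i
  proof (cases "i \<le> n")
    case True
    then show ?thesis
      using insert_max_skip_index[OF True, of g \<sigma>] insert_max_skip_index[OF True, of g \<sigma>'] eq \<open>g = g'\<close>
      by simp
  next
    case False
    then show ?thesis
      using permutes_not_in[OF \<sigma>] permutes_not_in[OF \<sigma>'] by simp
  qed
  with \<open>g = g'\<close> show ?thesis
    by auto
qed

(* Injectivity suffices: both sides have (n + 1)! elements. *)
lemma bij_betw_insert_max:
  "bij_betw (\<lambda>(\<sigma>, g). insert_max n g \<sigma>)
     ({\<sigma>. \<sigma> permutes {1..n}} \<times> {0..n}) {\<tau>. \<tau> permutes {1..Suc n}}"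
proof -
  let ?ins = "\<lambda>(\<sigma>, g). insert_max n g \<sigma>" and ?P = "\<lambda>n. {\<sigma>. \<sigma> permutes {1..n::nat}}"
  have inj: "inj_on ?ins (?P n \<times> {0..n})"
  proof (rule inj_onI)
    fix a b assume "a \<in> ?P n \<times> {0..n}" "b \<in> ?P n \<times> {0..n}" "?ins a = ?ins b"
    then show "a = b"
      using insert_max_inject[of "fst a" n "fst b" "snd b" "snd a"]
      by (simp add: mem_Times_iff case_prod_beta prod_eq_iff)
  qed
  have "?ins ` (?P n \<times> {0..n}) \<subseteq> ?P (Suc n)"
    using insert_max_permutes by auto
  moreover have "card (?ins ` (?P n \<times> {0..n})) = card (?P (Suc n))"
    using card_image[OF inj] by (simp add: card_cartesian_product card_permutations)
  ultimately have "?ins ` (?P n \<times> {0..n}) = ?P (Suc n)"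
    by (intro card_subset_eq) (simp_all add: finite_permutations)
  with inj show ?thesis
    by (simp add: bij_betw_def)
qed

definition inversions :: "nat \<Rightarrow> (nat \<Rightarrow> nat) \<Rightarrow> (nat \<times> nat) set" where
  "inversions n \<sigma> = {(i, j). 1 \<le> i \<and> i < j \<and> j \<le> n \<and> \<sigma> i > \<sigma> j}"

lemma inv_eq_card_inversions: "inv n \<sigma> = card (inversions n \<sigma>)"
  by (simp add: inv_def inversions_def)

lemma finite_inversions: "finite (inversions n \<sigma>)"
  by (rule finite_subset[of _ "{1..n} \<times> {1..n}"]) (auto simp: inversions_def)

lemma inversions_insert_max:
  assumes \<sigma>: "\<sigma> permutes {1..n}" and g: "g \<le> n"
  shows "inversions (Suc n) (insert_max n g \<sigma>)
    = map_prod (skip_index g) (skip_index g) ` inversions n \<sigma> \<union> {Suc g} \<times> {Suc (Suc g)..Suc n}"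
    (is "inversions (Suc n) ?\<tau> = ?old \<union> ?new")
proof (intro equalityI subsetI)
  fix p assume "p \<in> inversions (Suc n) ?\<tau>"
  then obtain x y where p: "p = (x, y)" and xy: "1 \<le> x" "x < y" "y \<le> Suc n" "?\<tau> y < ?\<tau> x"
    by (auto simp: inversions_def)
  have "?\<tau> x \<le> Suc n"
    using xy permutes_atLeastAtMost_le_iff[OF insert_max_permutes[OF \<sigma> g]] by simp
  then have "y \<noteq> Suc g"
    using xy insert_max_Suc[of n g \<sigma>] by auto
  show "p \<in> ?old \<union> ?new"
  proof (cases "x = Suc g")
    case True
    then show ?thesis
      using p xy by auto
  next
    case False
    then have "x \<in> skip_index g ` {1..n}" "y \<in> skip_index g ` {1..n}"
      using skip_index_image[OF g] xy \<open>y \<noteq> Suc g\<close> by auto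
    then obtain i j where ij: "x = skip_index g i" "y = skip_index g j" "i \<in> {1..n}" "j \<in> {1..n}"
      by blast
    then have "(i, j) \<in> inversions n \<sigma>"
      using xy strict_mono_less[OF strict_mono_skip_index] insert_max_skip_index[of _ n g \<sigma>]
      by (auto simp: inversions_def)
    then show ?thesis
      using p ij by auto
  qed
next
  fix p assume "p \<in> ?old \<union> ?new"
  then show "p \<in> inversions (Suc n) ?\<tau>"
  proof
    assume "p \<in> ?old"
    then obtain i j where "p = (skip_index g i, skip_index g j)" "(i, j) \<in> inversions n \<sigma>"
      by auto
    then show ?thesis
      using strict_mono_less[OF strict_mono_skip_index] insert_max_skip_index[of _ n g \<sigma>]
      by (auto simp: inversions_def skip_index_def)
  next
    assume "p \<in> ?new"
    then obtain y where y: "p = (Suc g, y)" "Suc (Suc g) \<le> y" "y \<le> Suc n"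
      by auto
    then have "?\<tau> y = \<sigma> (y - 1)" "y - 1 \<le> n"
      by (auto simp: insert_max_def)
    then have "?\<tau> y < ?\<tau> (Suc g)"
      using permutes_atLeastAtMost_le_iff[OF \<sigma>] insert_max_Suc[of n g \<sigma>] by (metis le_imp_less_Suc)
    then show ?thesis
      using y by (auto simp: inversions_def)
  qed
qed

lemma inv_insert_max:
  assumes "\<sigma> permutes {1..n}" and "g \<le> n"
  shows "inv (Suc n) (insert_max n g \<sigma>) = inv n \<sigma> + (n - g)"
proof -
  let ?old = "map_prod (skip_index g) (skip_index g) ` inversions n \<sigma>"
    and ?new = "{Suc g} \<times> {Suc (Suc g)..Suc n}"
  have "inj_on (map_prod (skip_index g) (skip_index g)) (inversions n \<sigma>)"
    by (rule inj_on_subset[OF _ subset_UNIV])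
       (intro prod.inj_map strict_mono_imp_inj_on strict_mono_skip_index)
  then have "card ?old = inv n \<sigma>"
    by (simp add: card_image inv_eq_card_inversions)
  moreover have "?old \<inter> ?new = {}"
    by (auto simp: skip_index_def split: if_splits)
  then have "card (?old \<union> ?new) = card ?old + card ?new"
    by (intro card_Un_disjoint) (simp_all add: finite_inversions)
  ultimately show ?thesis
    by (simp add: inv_eq_card_inversions inversions_insert_max[OF assms] card_cartesian_product)
qed

definition descent_word :: "nat \<Rightarrow> (nat \<Rightarrow> nat) \<Rightarrow> mvar list" where
  "descent_word n \<sigma> = map (\<lambda>k. if ext_perm n \<sigma> k > ext_perm n \<sigma> (Suc k) then VY else VX) [0..<Suc n]"

lemma length_descent_word [simp]: "length (descent_word n \<sigma>) = Suc n"
  by (simp add: descent_word_def)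

lemma nth_descent_word:
  "k \<le> n \<Longrightarrow> descent_word n \<sigma> ! k = (if ext_perm n \<sigma> k > ext_perm n \<sigma> (Suc k) then VY else VX)"
  by (simp add: descent_word_def nth_map_upt del: upt_Suc)

lemma ext_perm_le: "\<sigma> permutes {1..n} \<Longrightarrow> ext_perm n \<sigma> k \<le> n"
  by (simp add: ext_perm_def permutes_atLeastAtMost_le_iff)

lemma ext_perm_insert_max:
  assumes "g \<le> n"
  shows "ext_perm (Suc n) (insert_max n g \<sigma>) k =
    (if k \<le> g then ext_perm n \<sigma> k else if k = Suc g then Suc n else ext_perm n \<sigma> (k - 1))"
  using assms by (auto simp: ext_perm_def insert_max_def)

lemma descent_word_insert_max:
  assumes \<sigma>: "\<sigma> permutes {1..n}" and g: "g \<le> n"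
  shows "descent_word (Suc n) (insert_max n g \<sigma>)
    = take g (descent_word n \<sigma>) @ [VX, VY] @ drop (Suc g) (descent_word n \<sigma>)"
proof (rule nth_equalityI)
  show "length (descent_word (Suc n) (insert_max n g \<sigma>))
      = length (take g (descent_word n \<sigma>) @ [VX, VY] @ drop (Suc g) (descent_word n \<sigma>))"
    using g by simp
  fix k assume "k < length (descent_word (Suc n) (insert_max n g \<sigma>))"
  then have k: "k \<le> Suc n"
    by simp
  note ext = ext_perm_insert_max[OF g] ext_perm_le[OF \<sigma>]
  consider "k < g" | "k = g" | "k = Suc g" | "Suc g < k"
    by linarith
  then show "descent_word (Suc n) (insert_max n g \<sigma>) ! k
      = (take g (descent_word n \<sigma>) @ [VX, VY] @ drop (Suc g) (descent_word n \<sigma>)) ! k"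
  proof cases
    case 1
    then show ?thesis
      using g k by (simp add: nth_descent_word nth_append ext)
  next
    case 2
    then show ?thesis
      using g k ext(2)[of g] by (simp add: nth_descent_word nth_append ext(1))
  next
    case 3
    then show ?thesis
      using g k ext(2)[of "Suc g"] by (simp add: nth_descent_word nth_append ext(1))
  next
    case 4
    then have "k - Suc (Suc g) + Suc g = k - 1" "k - 1 \<le> n"
      using k by auto
    then show ?thesis
      using 4 g k by (simp add: nth_descent_word nth_append ext)
  qed
qed

lemma rev_take_append_drop:
  "j < length xs \<Longrightarrow>
    rev (take j xs @ [a, b] @ drop (Suc j) xs)
      = take (length xs - Suc j) (rev xs) @ [b, a] @ drop (Suc (length xs - Suc j)) (rev xs)"
  by (simp add: rev_take rev_drop Suc_diff_Suc)

lemma rev_descent_word_insert_max: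
  assumes "\<sigma> permutes {1..n}" and "g \<le> n"
  shows "rev (descent_word (Suc n) (insert_max n g \<sigma>))
    = take (n - g) (rev (descent_word n \<sigma>)) @ [VY, VX] @ drop (Suc (n - g)) (rev (descent_word n \<sigma>))"
  using rev_take_append_drop[of g "descent_word n \<sigma>" VX VY] assms
  by (simp add: descent_word_insert_max)

subsection \<open>The iterated derivative\<close>

definition perm_monomial :: "nat \<Rightarrow> (nat \<Rightarrow> nat) \<Rightarrow> 'k::comm_ring_1 E" where
  "perm_monomial n \<sigma> =
     Poly_Mapping.single (indexed_word 0 (rev (descent_word n \<sigma>))) ([:0, 1:] ^ inv n \<sigma>)"

lemma D_inv_perm_monomial:
  assumes \<sigma>: "\<sigma> permutes {1..n}"
  shows "D_inv (perm_monomial n \<sigma> :: 'k::comm_ring_1 E)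
    = (\<Sum>g\<in>{0..n}. perm_monomial (Suc n) (insert_max n g \<sigma>))"
proof -
  define F :: "nat \<Rightarrow> 'k E" where "F j = Poly_Mapping.single
      (indexed_word 0 (take j (rev (descent_word n \<sigma>)) @ [VY, VX] @ drop (Suc j) (rev (descent_word n \<sigma>))))
      ([:0, 1:] ^ inv n \<sigma> * [:0, 1:] ^ j)" for j
  have "D_inv (perm_monomial n \<sigma>) = (\<Sum>j\<in>{0..n}. F j)"
    by (simp add: perm_monomial_def D_inv_indexed_word F_def atLeast0AtMost lessThan_Suc_atMost)
  also have "\<dots> = (\<Sum>g\<in>{0..n}. F (n - g))"
    using sum.atLeastAtMost_rev[of F 0 n] by simp
  also have "\<dots> = (\<Sum>g\<in>{0..n}. perm_monomial (Suc n) (insert_max n g \<sigma>))"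
    by (rule sum.cong) (simp_all add: F_def perm_monomial_def rev_descent_word_insert_max[OF \<sigma>]
        inv_insert_max[OF \<sigma>] flip: power_add del: append.simps)
  finally show ?thesis .
qed

lemma D_inv_iterate:
  "(D_inv ^^ n) (gword [(VX, 0, False)])
    = (\<Sum>\<sigma> | \<sigma> permutes {1..n}. perm_monomial n \<sigma> :: 'k::comm_ring_1 E)"
proof (induction n)
  case 0
  have "inversions 0 id = {}"
    by (auto simp: inversions_def)
  then have "inv 0 id = 0" "descent_word 0 id = [VX]"
    by (simp_all add: inv_eq_card_inversions descent_word_def ext_perm_def)
  then show ?case
    using gword_indexed_word[of 0 "[VX]"] by (simp add: perm_monomial_def id_def)
next
  case (Suc n)
  have "(D_inv ^^ Suc n) (gword [(VX, 0, False)])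
      = D_inv (\<Sum>\<sigma> | \<sigma> permutes {1..n}. perm_monomial n \<sigma> :: 'k E)"
    using Suc.IH by simp
  also have "\<dots> = (\<Sum>\<sigma> | \<sigma> permutes {1..n}. D_inv (perm_monomial n \<sigma>))"
    unfolding D_inv_def qderiv_def by (rule linE_sum)
  also have "\<dots> = (\<Sum>\<sigma> | \<sigma> permutes {1..n}. \<Sum>g\<in>{0..n}. perm_monomial (Suc n) (insert_max n g \<sigma>))"
    by (rule sum.cong) (simp_all add: D_inv_perm_monomial)
  also have "\<dots> = (\<Sum>(\<sigma>, g) \<in> {\<sigma>. \<sigma> permutes {1..n}} \<times> {0..n}. perm_monomial (Suc n) (insert_max n g \<sigma>))"
    by (rule sum.cartesian_product)
  also have "\<dots> = (\<Sum>\<tau> | \<tau> permutes {1..Suc n}. perm_monomial (Suc n) \<tau>)"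
    using sum.reindex_bij_betw[OF bij_betw_insert_max[of n], of "perm_monomial (Suc n)"]
    by (simp add: case_prod_beta')
  finally show ?case .
qed

subsection \<open>Evaluation\<close>

lemma prod_phi_letter_indexed_word:
  "prod_list (map phi_letter (indexed_word k cs))
    = (prod_list (map (\<lambda>c. if c = VX then varx else vary) cs) :: 'k::comm_ring_1 poly poly poly)"
  by (induction cs arbitrary: k) auto

lemma prod_phi_letter_descent_word:
  "prod_list (map phi_letter (indexed_word k (rev (descent_word n \<sigma>))))
    = (varx ^ asc n \<sigma> * vary ^ des n \<sigma> :: 'k::comm_ring_1 poly poly poly)"
proof -
  define P where "P k \<longleftrightarrow> ext_perm n \<sigma> k > ext_perm n \<sigma> (Suc k)" for k
  have phi_letter_choice: "(if (if b then VY else VX) = VX then varx else vary) = (if b then vary else varx)" for b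
    by simp
  have "prod_list (map phi_letter (indexed_word k (rev (descent_word n \<sigma>))))
      = (prod_list (map (\<lambda>k. if P k then vary else varx) [0..<Suc n]) :: 'k poly poly poly)"
    by (simp add: prod_phi_letter_indexed_word descent_word_def o_def P_def phi_letter_choice
        flip: rev_map del: upt_Suc)
  also have "\<dots> = (\<Prod>k\<in>{0..n}. if P k then vary else varx)"
    by (simp add: prod.distinct_set_conv_list[symmetric] atLeastLessThanSuc_atLeastAtMost del: upt_Suc)
  also have "\<dots> = vary ^ card {k \<in> {0..n}. P k} * varx ^ card {k \<in> {0..n}. \<not> P k}"
    by (simp add: prod.If_cases Int_def)
  finally show ?thesis
    by (simp add: asc_def des_def P_def mult.commute)
qed

lemma phi_perm_monomial:
  "phi (perm_monomial n \<sigma> :: 'k::comm_ring_1 E)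
    = embq ([:0, 1:] ^ inv n \<sigma>) * varx ^ asc n \<sigma> * vary ^ des n \<sigma>"
  by (simp add: perm_monomial_def phi_single prod_phi_letter_descent_word mult.assoc)

theorem theorem5p4:
  fixes n :: nat
  assumes "n \<ge> 1"
  shows "phi ((D_inv ^^ n) (gword [(VX, 0, False)]) :: ('k::{comm_ring_1, ring_char_0}) E) = A_inv n"
proof -
  have "phi ((D_inv ^^ n) (gword [(VX, 0, False)]) :: 'k E)
      = (\<Sum>\<sigma> | \<sigma> permutes {1..n}. phi (perm_monomial n \<sigma> :: 'k E))"
    by (simp add: D_inv_iterate phi_sum)
  also have "\<dots> = A_inv n"
    by (simp add: phi_perm_monomial A_inv_def)
  finally show ?thesis .
qed

end
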